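(* Let $m\ge1$, $q=2^m$, let $n$ be even, and let $L(x)=L_k\big(x^{2^k}\big)+L_l\big(x^{2^l}\big)$, where $L_k,L_l$ are $q^2$-linear polynomials over $\mathbb F_{q^n}$ and $k,l$ are integers with $0\le k<l<2m$. Let $e=\gcd(l-k,2m)$, $a=L_k(1)$, $b=L_l(1)$ and $\delta=a^{q^2}b+ab^{q^2}$. Then $\ker(\mathrm{Tr}_2\circ L^\prime)\subseteq\ker\mathrm{Tr}$ if and only if one of the following holds: (1) $l-k=m$, $a\notin\mathbb F_{q^2}$, $\delta\ne0$ and \[\delta^q\big(a^{q^2}+a\big)+\delta\big(b^{q^3}+b^q\big)=\delta^q\big(b^{q^2}+b\big)+\delta\big(a^{q^3}+a^q\big)=0;\] (2) $a,b\in\mathbb F_{q^2}$ and $a^{\frac{q^2-1}{2^e-1}}\ne b^{\frac{q^2-1}{2^e-1}}$; (3) $e$ divides $m$, $a,b\in\mathbb F_{q^2}^*$ and $a^{\frac{2^{l-k}(q-1)}{2^e-1}}=b^{\frac{q-1}{2^e-1}}$.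
   Context: $\mathrm{Tr}$ denotes the trace map of $\mathbb F_{q^n}$ over $\mathbb F_q$ and $\mathrm{Tr}_2$ the trace map of $\mathbb F_{q^n}$ over $\mathbb F_{q^2}$. A $q^2$-linear polynomial over $\mathbb F_{q^n}$ has the form $\sum_{j=0}^{n/2-1}c_jx^{q^{2j}}$ with $c_j\in\mathbb F_{q^n}$. For a $2$-linear polynomial $L(x)=\sum_{j=0}^{mn-1}a_jx^{2^j}$ over $\mathbb F_{q^n}$, its adjoint is $L^\prime(x)=\sum_j(a_jx)^{2^{-j}}$, where $y\mapsto y^{2^{-j}}$ is the inverse of $y\mapsto y^{2^j}$ on $\mathbb F_{q^n}$. Polynomials are regarded as maps on $\mathbb F_{q^n}$; $\ker$ denotes the kernel of an additive map. *)

theory Defs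
  imports Main
begin

definition trace_q :: "nat \<Rightarrow> nat \<Rightarrow> 'a::field \<Rightarrow> 'a" where
  "trace_q q n x = (\<Sum>i<n. x ^ (q ^ i))"

definition trace_q2 :: "nat \<Rightarrow> nat \<Rightarrow> 'a::field \<Rightarrow> 'a" where
  "trace_q2 q n x = (\<Sum>j<n div 2. x ^ (q ^ (2 * j)))"

definition q2_linear :: "nat \<Rightarrow> nat \<Rightarrow> (nat \<Rightarrow> 'a::field) \<Rightarrow> 'a \<Rightarrow> 'a" where
  "q2_linear q n c x = (\<Sum>j<n div 2. c j * x ^ (q ^ (2 * j)))"

definition lin2_poly :: "nat \<Rightarrow> (nat \<Rightarrow> 'a::field) \<Rightarrow> 'a \<Rightarrow> 'a" where
  "lin2_poly N a x = (\<Sum>j<N. a j * x ^ (2 ^ j))"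

text \<open>Adjoint of the 2-linear polynomial sum_{j<N} a_j x^(2^j):
  L'(x) = sum_j (a_j x)^(2^(-j)), where y \<mapsto> y^(2^(-j)) is the inverse of y \<mapsto> y^(2^j).\<close>
definition adjoint2 :: "nat \<Rightarrow> (nat \<Rightarrow> 'a::field) \<Rightarrow> 'a \<Rightarrow> 'a" where
  "adjoint2 N a x = (\<Sum>j<N. inv (\<lambda>y::'a. y ^ (2 ^ j)) (a j * x))"

text \<open>Coefficients (as a 2-linear polynomial of 2-degree < m n) of
  L(x) = L_k(x^(2^k)) + L_l(x^(2^l)) where L_k, L_l are q^2-linear with coefficient
  sequences c, d (q = 2^m): the term c_j x^(q^(2j) 2^k) has index 2 m j + k.\<close>
definition coeffL :: "nat \<Rightarrow> nat \<Rightarrow> nat \<Rightarrow> (nat \<Rightarrow> 'a::field) \<Rightarrow> (nat \<Rightarrow> 'a) \<Rightarrow> nat \<Rightarrow> 'a" where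
  "coeffL m k l c d i =
     (if i mod (2 * m) = k then c (i div (2 * m)) else 0) +
     (if i mod (2 * m) = l then d (i div (2 * m)) else 0)"

end

theory Submission
  imports Defs "HOL-Computational_Algebra.Polynomial"
begin

text \<open>Let F be the field with 2^N elements, N = m n, and let F_q and F_(q^2) be the fixed
  fields of the m-th and 2m-th powers of the Frobenius map. For the trace form Tr(x y), the
  kernel of Tr_2 o L' is the orthogonal complement of L(F_(q^2)) and the kernel of Tr that of
  F_q, so the inclusion of kernels says that F_q is contained in L(F_(q^2)). On F_(q^2), and
  after replacing y by y^(2^k), the map L is y \<mapsto> a y + b y^(2^s) with s = l - k.

  If a or b lies outside F_(q^2), the equation u = a y + b y^(2^s) and its q^2-th power form a
  linear system in y and y^(2^s) with determinant \<delta>. Solving it shows that the preimages of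
  u in F_q are u times the preimage of 1, which forces u^(2^s) = u on F_q, i.e. s = m; the two
  equations of (1) say exactly that this recipe produces preimages.

  If a and b lie in F_(q^2), the adjoint commutes with the trace onto F_(q^2), and duality
  turns the condition into: every root w in F_(q^2) of (a w)^(2^s) = b w lies in F_q. The
  nonzero roots are the (2^s - 1)-th roots of c = b / a^(2^s). They exist iff c is a
  ((q^2 - 1)/(2^e - 1))-th root of unity, and then form a coset of the units of the field with
  2^e elements; that coset lies in F_q iff e divides m and c is a (2^s - 1)-th power in F_q.
  This gives (2) and (3).\<close>

text \<open>The library's \<open>finite_field_power_card_eq_same\<close> needs the sort \<open>finite_field\<close>,
  which a type variable of sort \<open>{field, finite}\<close> does not have.\<close>
lemma finite_field_power_card:
  fixes x :: "'a::{field,finite}"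
  shows "x ^ card (UNIV :: 'a set) = x"
proof (cases "x = 0")
  case True
  then show ?thesis by (simp add: finite_UNIV_card_ge_0)
next
  case False
  let ?U = "UNIV - {0::'a}"
  have "(\<Prod>y\<in>?U. x * y) = (\<Prod>y\<in>?U. y)"
    by (rule prod.reindex_bij_witness[of _ "\<lambda>y. y / x" "\<lambda>y. x * y"]) (use False in auto)
  then have "x ^ card ?U * (\<Prod>y\<in>?U. y) = (\<Prod>y\<in>?U. y)" by (simp add: prod.distrib)
  then have 1: "x ^ card ?U = 1" by simp
  have "card (UNIV :: 'a set) = Suc (card ?U)"
    using finite_UNIV_card_ge_0[where 'a = 'a] by (simp add: card_Diff_singleton)
  then have "x ^ card (UNIV :: 'a set) = x * x ^ card ?U" by (simp only: power_Suc)
  with 1 show ?thesis by (simp only: mult_1_right)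
qed

lemma card_roots_sparse_poly_le:
  fixes c :: "nat \<Rightarrow> 'a::idom"
  assumes "finite S" "d \<in> S" "\<And>i. i \<in> S \<Longrightarrow> i \<le> d" "c d \<noteq> 0"
  shows "card {x. (\<Sum>i\<in>S. c i * x ^ i) = 0} \<le> d"
proof -
  define p where "p = (\<Sum>i\<in>S. monom (c i) i)"
  have poly_p: "poly p x = (\<Sum>i\<in>S. c i * x ^ i)" for x
    by (simp add: p_def poly_sum poly_monom)
  have "coeff p d = c d"
    using assms(1,2) by (simp add: p_def coeff_sum coeff_monom eq_commute sum.delta)
  then have "p \<noteq> 0" using assms(4) by auto
  have "degree p \<le> d"
    unfolding p_def by (rule degree_sum_le[OF assms(1)]) (meson assms(3) degree_monom_le order_trans)
  then show ?thesis
    using card_poly_roots_bound[OF \<open>p \<noteq> 0\<close>] poly_p by simp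
qed

lemma power2_minus_1_dvd:
  assumes "h dvd s"
  shows "(2 ^ h - 1) dvd (2 ^ s - (1::nat))"
proof -
  obtain t where s: "s = h * t" using assms by blast
  have "((2::int) ^ h - 1) dvd ((2 ^ h) ^ t - 1)"
    by (simp add: power_diff_1_eq)
  then have "int (2 ^ h - 1) dvd int (2 ^ s - 1)"
    by (simp add: s power_mult of_nat_diff)
  then show ?thesis by (simp only: of_nat_dvd_iff)
qed

lemma power2_minus_1_div_gcd_pos:
  assumes "g > 0"
  shows "(2 ^ g - 1) div (2 ^ gcd s g - 1) > (0::nat)"
proof -
  have "(2 ^ gcd s g - 1) dvd (2 ^ g - (1::nat))" by (rule power2_minus_1_dvd) simp
  moreover have "(1::nat) < 2 ^ g" using assms by (intro one_less_power) auto
  ultimately show ?thesis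
    using dvd_div_eq_0_iff[of "2 ^ gcd s g - 1" "2 ^ g - (1::nat)"] by linarith
qed

lemma card_eq_card_fibre_mult_card_image:
  assumes "finite A" "\<And>x. x \<in> A \<Longrightarrow> card {y \<in> A. f y = f x} = k"
  shows "card A = k * card (f ` A)"
proof -
  have "card A = card (\<Union>v\<in>f ` A. {y \<in> A. f y = v})"
    by (rule arg_cong[where f = card]) auto
  also have "\<dots> = (\<Sum>v\<in>f ` A. card {y \<in> A. f y = v})"
    by (rule card_UN_disjoint) (use assms(1) in auto)
  also have "\<dots> = (\<Sum>v\<in>f ` A. k)"
    by (rule sum.cong) (auto simp: assms(2))
  finally show ?thesis by simp
qed

lemma card_UNIV_eq_card_kernel_mult_card_range:
  fixes f :: "'a::{ab_group_add,finite} \<Rightarrow> 'b::ab_group_add"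
  assumes add: "\<And>x y. f (x + y) = f x + f y"
  shows "card (UNIV :: 'a set) = card {x. f x = 0} * card (range f)"
proof (rule card_eq_card_fibre_mult_card_image)
  fix x :: 'a
  have f_diff: "f (y - x) = f y - f x" for y
    using add[of "y - x" x] by (simp add: algebra_simps)
  show "card {y \<in> UNIV. f y = f x} = card {x. f x = 0}"
    by (rule bij_betw_same_card[of "\<lambda>y. y - x"], rule bij_betw_byWitness[of _ "\<lambda>y. y + x"])
      (auto simp: f_diff add)
qed simp

section \<open>Fixed points of powers of the Frobenius map\<close>

text \<open>In a field with \<open>2 ^ N\<close> elements and for \<open>g\<close> dividing \<open>N\<close>, this is the subfield with
  \<open>2 ^ g\<close> elements; F_q and F_(q^2) are \<open>frob_fix m\<close> and \<open>frob_fix (2 * m)\<close>.\<close>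
abbreviation frob_fix :: "nat \<Rightarrow> 'a::monoid_mult set" where
  "frob_fix g \<equiv> {x. x ^ 2 ^ g = x}"

lemma power2_add_exp: "(x::'a::monoid_mult) ^ 2 ^ (i + j) = (x ^ 2 ^ i) ^ 2 ^ j"
  by (simp add: power_add power_mult)

lemma frob_fix_mult_exp:
  assumes "(x::'a::monoid_mult) \<in> frob_fix g"
  shows "x \<in> frob_fix (g * t)"
proof (induction t)
  case (Suc t)
  then show ?case
    using assms by (simp add: power2_add_exp add.commute)
qed simp

lemma frob_fix_mono: "g dvd h \<Longrightarrow> frob_fix g \<subseteq> (frob_fix h :: 'a::monoid_mult set)"
  using frob_fix_mult_exp by (auto elim!: dvdE)

lemma frob_fix_power2_mod:
  assumes "(x::'a::monoid_mult) \<in> frob_fix g"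
  shows "x ^ 2 ^ i = x ^ 2 ^ (i mod g)"
proof -
  have "x ^ 2 ^ i = (x ^ 2 ^ (g * (i div g))) ^ 2 ^ (i mod g)"
    by (simp only: power2_add_exp[symmetric] mult_div_mod_eq)
  then show ?thesis
    using frob_fix_mult_exp[OF assms] by simp
qed

lemma frob_fix_Int: "frob_fix s \<inter> frob_fix g = (frob_fix (gcd s g) :: 'a::monoid_mult set)"
proof (rule equalityI)
  show "frob_fix s \<inter> frob_fix g \<subseteq> (frob_fix (gcd s g) :: 'a set)"
  proof (cases "s = 0")
    case False
    obtain u v where uv: "s * u = g * v + gcd s g" using bezout_nat[OF False] by blast
    show ?thesis
    proof (rule subsetI)
      fix x :: 'a assume "x \<in> frob_fix s \<inter> frob_fix g"
      then have x: "x \<in> frob_fix s" "x \<in> frob_fix g" by auto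
      have "x = x ^ 2 ^ (s * u)" using frob_fix_mult_exp[OF x(1)] by simp
      also have "\<dots> = (x ^ 2 ^ (g * v)) ^ 2 ^ gcd s g" by (simp only: uv power2_add_exp)
      also have "\<dots> = x ^ 2 ^ gcd s g" using frob_fix_mult_exp[OF x(2)] by simp
      finally show "x \<in> frob_fix (gcd s g)" by simp
    qed
  qed simp
next
  show "frob_fix (gcd s g) \<subseteq> frob_fix s \<inter> (frob_fix g :: 'a set)"
    using frob_fix_mono[of "gcd s g" s] frob_fix_mono[of "gcd s g" g] by auto
qed

lemma frob_fix_mult:
  "x \<in> frob_fix g \<Longrightarrow> y \<in> frob_fix g \<Longrightarrow> x * y \<in> (frob_fix g :: 'a::comm_monoid_mult set)"
  by (simp add: power_mult_distrib)

lemma frob_fix_divide: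
  "x \<in> frob_fix g \<Longrightarrow> y \<in> frob_fix g \<Longrightarrow> x / y \<in> (frob_fix g :: 'a::field set)"
  by (simp add: power_divide)

lemma frob_fix_power:
  assumes "x \<in> (frob_fix g :: 'a::monoid_mult set)"
  shows "x ^ j \<in> frob_fix g"
proof -
  have "(x ^ j) ^ 2 ^ g = (x ^ 2 ^ g) ^ j" by (simp only: power_mult[symmetric] mult.commute)
  with assms show ?thesis by simp
qed

lemma power2_minus_1_eq_1_iff:
  assumes "(x::'a::field) \<noteq> 0"
  shows "x ^ (2 ^ s - 1) = 1 \<longleftrightarrow> x \<in> frob_fix s"
proof -
  have "x ^ 2 ^ s = x ^ (2 ^ s - 1) * x"
    using power_minus_mult[of "2 ^ s" x] by simp
  then show ?thesis using assms by auto
qed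

lemma power2_minus_1_eq_1_frob_fix_iff:
  assumes "(x::'a::field) \<noteq> 0"
  shows "x ^ (2 ^ s - 1) = 1 \<and> x \<in> frob_fix g \<longleftrightarrow> x \<in> frob_fix (gcd s g)"
  using power2_minus_1_eq_1_iff[OF assms] frob_fix_Int by blast

lemma frob_linear_eq_iff_power_root:
  assumes "(a::'a::field) \<noteq> 0"
  shows "(a * w) ^ 2 ^ s = b * w \<longleftrightarrow> w = 0 \<or> w ^ (2 ^ s - 1) = b / a ^ 2 ^ s"
proof -
  have "(a * w) ^ 2 ^ s = (a ^ 2 ^ s * w ^ (2 ^ s - 1)) * w"
    using power_minus_mult[of "2 ^ s" w] by (simp add: power_mult_distrib mult.assoc)
  then have "(a * w) ^ 2 ^ s = b * w \<longleftrightarrow> w = 0 \<or> a ^ 2 ^ s * w ^ (2 ^ s - 1) = b"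
    by auto
  then show ?thesis using assms by (auto simp: eq_divide_eq mult.commute)
qed

lemma power_exp_square: "(x::'a::monoid_mult) ^ n\<^sup>2 = (x ^ n) ^ n"
  by (simp add: power2_eq_square power_mult)

lemma power_exp_cube: "(x::'a::monoid_mult) ^ n ^ 3 = (x ^ n\<^sup>2) ^ n"
  by (simp add: power_mult[symmetric] power_add[symmetric] numeral_3_eq_3 power2_eq_square
      mult.commute)

text \<open>For \<open>g r = N\<close>, the trace of the field with \<open>2 ^ N\<close> elements onto \<open>frob_fix g\<close>.\<close>
definition rel_trace :: "nat \<Rightarrow> nat \<Rightarrow> 'a::field \<Rightarrow> 'a" where
  "rel_trace g r x = (\<Sum>i<r. x ^ 2 ^ (g * i))"

lemma rel_trace_zero [simp]: "rel_trace g r 0 = 0"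
  by (simp add: rel_trace_def power_0_left)

lemma trace_q_eq_rel_trace: "q = 2 ^ m \<Longrightarrow> trace_q q n x = rel_trace m n x"
  by (simp add: trace_q_def rel_trace_def power_mult[symmetric])

lemma trace_q2_eq_rel_trace: "q = 2 ^ m \<Longrightarrow> trace_q2 q n x = rel_trace (2 * m) (n div 2) x"
  by (simp add: trace_q2_def rel_trace_def power_mult[symmetric] mult.assoc mult.left_commute)

section \<open>Finite fields of characteristic two\<close>

locale binary_field =
  fixes N :: nat and field_type :: "'a::{field,finite} itself"
  assumes card_UNIV: "card (UNIV :: 'a set) = 2 ^ N"
begin

lemma two_power_N_eq_0: "(2::'a) ^ N = 0"
proof -
  have "(\<Sum>y\<in>UNIV. y + (1::'a)) = (\<Sum>y\<in>UNIV. y)"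
    by (rule sum.reindex_bij_witness[of _ "\<lambda>y. y - 1" "\<lambda>y. y + 1"]) auto
  then show ?thesis using card_UNIV by (simp add: sum.distrib)
qed

lemma N_pos: "N > 0"
  using two_power_N_eq_0 by (cases N) auto

lemma two_eq_0: "(2::'a) = 0"
  using two_power_N_eq_0 by simp

lemma CHAR_eq_2: "CHAR('a) = 2"
proof (rule CHAR_eq_posI)
  show "of_nat 2 = (0::'a)" using two_eq_0 by simp
qed (auto simp: less_2_cases_iff)

lemma add_self [simp]: "x + x = (0::'a)"
  by (metis mult_2 mult_zero_left two_eq_0)

lemma eq_iff_add_eq_0: "x = y \<longleftrightarrow> x + y = (0::'a)"
  by (metis add_self add_right_imp_eq)

lemma frob_add: "(x + y) ^ 2 ^ j = x ^ 2 ^ j + (y::'a) ^ 2 ^ j"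
  by (rule freshmans_dream') (simp_all add: CHAR_eq_2)

lemma frob_sum: "(\<Sum>i\<in>A. f i) ^ 2 ^ j = (\<Sum>i\<in>A. (f i::'a) ^ 2 ^ j)"
  by (rule freshmans_dream_sum') (simp_all add: CHAR_eq_2)

lemma frob_inj: "x ^ 2 ^ j = y ^ 2 ^ j \<Longrightarrow> x = (y::'a)"
  by (metis frob_add eq_iff_add_eq_0 power_eq_0_iff)

lemma frob_inv: "inv (\<lambda>y::'a. y ^ 2 ^ j) z ^ 2 ^ j = z"
proof -
  have "inj (\<lambda>y::'a. y ^ 2 ^ j)" by (rule injI) (rule frob_inj)
  then have "surj (\<lambda>y::'a. y ^ 2 ^ j)" by (rule finite_UNIV_inj_surj[OF finite_UNIV])
  then show ?thesis by (rule surj_f_inv_f)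
qed

lemma power_2_N: "(x::'a) ^ 2 ^ N = x"
  using finite_field_power_card[of x] card_UNIV by simp

lemma frob_fix_add: "x \<in> frob_fix g \<Longrightarrow> y \<in> frob_fix g \<Longrightarrow> x + y \<in> (frob_fix g :: 'a set)"
  by (simp add: frob_add)

lemma card_frob_fix_le:
  assumes "h > 0"
  shows "card (frob_fix h :: 'a set) \<le> 2 ^ h"
proof -
  have ne: "(1::nat) \<noteq> 2 ^ h" using one_less_power[of "2::nat" h] assms by simp
  have "(frob_fix h :: 'a set) = {x. (\<Sum>i\<in>{1, 2 ^ h}. 1 * x ^ i) = 0}"
    using ne eq_iff_add_eq_0 by (auto simp: add.commute)
  also have "card \<dots> \<le> 2 ^ h"
    by (rule card_roots_sparse_poly_le) (use ne in auto)
  finally show ?thesis .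
qed

lemma card_roots_of_unity_le:
  assumes "E > 0"
  shows "card {x::'a. x ^ E = 1} \<le> E"
proof -
  have ne: "(0::nat) \<noteq> E" using assms by simp
  have "{x::'a. x ^ E = 1} = {x. (\<Sum>i\<in>{0, E}. 1 * x ^ i) = 0}"
    using ne eq_iff_add_eq_0 by (auto simp: add.commute)
  also have "card \<dots> \<le> E"
    by (rule card_roots_sparse_poly_le) (use ne in auto)
  finally show ?thesis .
qed

lemma rel_trace_add: "rel_trace g r (x + y) = rel_trace g r x + rel_trace g r (y::'a)"
  by (simp add: rel_trace_def frob_add sum.distrib)

lemma rel_trace_sum: "rel_trace g r (\<Sum>i\<in>A. f i) = (\<Sum>i\<in>A. rel_trace g r (f i::'a))"
  by (simp add: rel_trace_def frob_sum sum.swap[of _ A])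

lemma rel_trace_frob: "rel_trace g r ((x::'a) ^ 2 ^ j) = rel_trace g r x ^ 2 ^ j"
  unfolding rel_trace_def frob_sum
  by (rule sum.cong) (simp_all flip: power_mult add: mult.commute)

lemma rel_trace_scale:
  assumes "c \<in> frob_fix g"
  shows "rel_trace g r (c * x) = c * rel_trace g r (x::'a)"
proof -
  have "c ^ 2 ^ (g * i) = c" for i using frob_fix_mult_exp[OF assms, of i] by simp
  then show ?thesis by (simp add: rel_trace_def power_mult_distrib sum_distrib_left)
qed

lemma rel_trace_frob_fix_shift:
  assumes "g * r = N"
  shows "rel_trace g r ((x::'a) ^ 2 ^ g) = rel_trace g r x"
proof -
  define f where "f i = x ^ 2 ^ (g * i)" for i
  have "f r = f 0" using power_2_N assms by (simp add: f_def)
  have "(\<Sum>i<r. f (Suc i)) + f 0 = (\<Sum>i<r. f i) + f r"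
    by (simp only: sum.lessThan_Suc_shift[symmetric] sum.lessThan_Suc add.commute)
  then have "(\<Sum>i<r. f (Suc i)) = (\<Sum>i<r. f i)" using \<open>f r = f 0\<close> by simp
  then show ?thesis
    by (simp add: rel_trace_def f_def flip: power2_add_exp add: add.commute)
qed

lemma rel_trace_in_frob_fix: "g * r = N \<Longrightarrow> rel_trace g r (x::'a) \<in> frob_fix g"
  using rel_trace_frob_fix_shift rel_trace_frob by simp

lemma card_rel_trace_kernel_le:
  assumes "g > 0" "r > 0"
  shows "card {x::'a. rel_trace g r x = 0} \<le> 2 ^ (g * (r - 1))"
proof -
  let ?S = "(\<lambda>j. 2 ^ (g * j) :: nat) ` {..<r}"
  have inj: "inj_on (\<lambda>j. 2 ^ (g * j) :: nat) {..<r}"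
    using assms(1) by (intro inj_onI) simp
  have "{x::'a. rel_trace g r x = 0} = {x. (\<Sum>i\<in>?S. 1 * x ^ i) = 0}"
    by (simp add: rel_trace_def sum.reindex[OF inj])
  also have "card \<dots> \<le> 2 ^ (g * (r - 1))"
    by (rule card_roots_sparse_poly_le) (use assms in auto)
  finally show ?thesis .
qed

text \<open>The kernel of the relative trace is small, so its range, which lies in the fixed
  field of the \<open>g\<close>-th Frobenius power, is large; hence both have \<open>2 ^ g\<close> elements.\<close>
lemma range_rel_trace:
  assumes "g > 0" "g * r = N"
  shows "range (rel_trace g r :: 'a \<Rightarrow> 'a) = frob_fix g"
    and "card (frob_fix g :: 'a set) = 2 ^ g"
proof -
  let ?K = "frob_fix g :: 'a set" and ?R = "range (rel_trace g r :: 'a \<Rightarrow> 'a)"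
  have "r > 0" using assms N_pos by (cases r) auto
  have sub: "?R \<subseteq> ?K" using rel_trace_in_frob_fix[OF assms(2)] by auto
  have "N = g * (r - 1) + g" using assms(2) \<open>r > 0\<close> by (cases r) auto
  then have "2 ^ (g * (r - 1)) * 2 ^ g = card (UNIV :: 'a set)"
    by (simp add: card_UNIV power_add)
  also have "\<dots> = card {x::'a. rel_trace g r x = 0} * card ?R"
    by (rule card_UNIV_eq_card_kernel_mult_card_range) (rule rel_trace_add)
  also have "\<dots> \<le> 2 ^ (g * (r - 1)) * card ?R"
    using card_rel_trace_kernel_le[OF assms(1) \<open>r > 0\<close>] by simp
  finally have "2 ^ g \<le> card ?R" by simp
  moreover have "card ?R \<le> card ?K" by (rule card_mono[OF _ sub]) simp
  moreover have "card ?K \<le> 2 ^ g" by (rule card_frob_fix_le[OF assms(1)])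
  ultimately show "card ?K = 2 ^ g" and "?R = ?K"
    using card_subset_eq[OF _ sub] by auto
qed

lemma card_frob_fix:
  assumes "g > 0" "g dvd N"
  shows "card (frob_fix g :: 'a set) = 2 ^ g"
  using assms range_rel_trace(2)[of g "N div g"] by simp

subsection \<open>Duality for the trace form\<close>

abbreviation tr :: "'a \<Rightarrow> 'a" where
  "tr \<equiv> rel_trace 1 N"

lemma trace_frob: "tr ((x::'a) ^ 2 ^ j) = tr x"
proof (induction j)
  case (Suc j)
  have "tr (x ^ 2 ^ Suc j) = tr ((x ^ 2 ^ j) ^ 2 ^ 1)"
    by (simp only: power2_add_exp[symmetric] Suc_eq_plus1)
  also have "\<dots> = tr (x ^ 2 ^ j)" by (rule rel_trace_frob_fix_shift) simp
  finally show ?case using Suc by simp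
qed simp

lemma trace_0_or_1: "tr (x::'a) = 0 \<or> tr x = 1"
proof -
  have "tr x ^ 2 = tr x" using rel_trace_in_frob_fix[of 1 N x] by simp
  then have "tr x * (tr x - 1) = 0" by (simp add: algebra_simps power2_eq_square)
  then show ?thesis by simp
qed

lemma trace_nonzero: "\<exists>z::'a. tr z \<noteq> 0"
proof (rule ccontr)
  assume "\<not> (\<exists>z::'a. tr z \<noteq> 0)"
  then have "card (UNIV :: 'a set) \<le> 2 ^ (1 * (N - 1))"
    using card_rel_trace_kernel_le[of 1 N] N_pos by simp
  then show False using card_UNIV N_pos by simp
qed

lemma trace_form_nondegenerate:
  assumes "\<And>z. tr (w * z) = 0"
  shows "w = (0::'a)"
proof (rule ccontr)
  assume "w \<noteq> 0"
  obtain z :: 'a where "tr z \<noteq> 0" using trace_nonzero by blast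
  with \<open>w \<noteq> 0\<close> assms[of "z / w"] show False by simp
qed

definition trace_perp :: "'a set \<Rightarrow> 'a set" where
  "trace_perp U = {y. \<forall>u\<in>U. tr (u * y) = 0}"

definition trace_char :: "'a \<Rightarrow> int" where
  "trace_char x = (if tr x = 0 then 1 else -1)"

lemma trace_char_add: "trace_char (x + y) = trace_char x * trace_char y"
proof -
  have "(1::'a) + 1 = 0" by simp
  then show ?thesis
    using trace_0_or_1[of x] trace_0_or_1[of y] rel_trace_add[of 1 N x y]
    by (auto simp: trace_char_def)
qed

lemma sum_trace_char:
  assumes add_closed: "\<And>u v. u \<in> U \<Longrightarrow> v \<in> U \<Longrightarrow> u + v \<in> U"
  shows "(\<Sum>u\<in>U. trace_char (u * y)) = (if y \<in> trace_perp U then int (card U) else 0)"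
proof (cases "y \<in> trace_perp U")
  case True
  then have "(\<Sum>u\<in>U. trace_char (u * y)) = (\<Sum>u\<in>U. 1)"
    by (intro sum.cong) (auto simp: trace_perp_def trace_char_def)
  then show ?thesis using True by simp
next
  case False
  then obtain u0 where u0: "u0 \<in> U" "tr (u0 * y) \<noteq> 0" by (auto simp: trace_perp_def)
  then have char_u0: "trace_char (u0 * y) = -1" by (simp add: trace_char_def)
  have "(\<Sum>u\<in>U. trace_char (u * y)) = (\<Sum>u\<in>U. trace_char ((u + u0) * y))"
    by (rule sum.reindex_bij_witness[of _ "\<lambda>u. u + u0" "\<lambda>u. u + u0"])
      (auto simp: add_closed u0 add.assoc)
  also have "\<dots> = - (\<Sum>u\<in>U. trace_char (u * y))"
    by (simp add: distrib_right trace_char_add char_u0 sum_negf)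
  finally show ?thesis using False by simp
qed

lemma card_mult_card_trace_perp:
  assumes add_closed: "\<And>u v. u \<in> U \<Longrightarrow> v \<in> U \<Longrightarrow> u + v \<in> U" and "0 \<in> U"
  shows "card U * card (trace_perp U) = card (UNIV :: 'a set)"
proof -
  have perp_UNIV: "trace_perp (UNIV :: 'a set) = {0}"
    using trace_form_nondegenerate by (auto simp: trace_perp_def mult.commute)
  have "int (card U) * int (card (trace_perp U)) = (\<Sum>y\<in>UNIV. \<Sum>u\<in>U. trace_char (u * y))"
    by (simp add: sum_trace_char[OF add_closed] sum.If_cases)
  also have "\<dots> = (\<Sum>u\<in>U. \<Sum>y\<in>UNIV. trace_char (y * u))"
    by (subst sum.swap) (simp add: mult.commute)
  also have "\<dots> = (\<Sum>u\<in>U. if u = 0 then int (card (UNIV :: 'a set)) else 0)"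
    by (rule sum.cong) (auto simp: sum_trace_char[of UNIV] perp_UNIV)
  also have "\<dots> = int (card (UNIV :: 'a set))" using \<open>0 \<in> U\<close> by (simp add: sum.delta)
  finally show ?thesis by (simp only: of_nat_mult[symmetric] of_nat_eq_iff)
qed

lemma trace_perp_add_closed:
  "u \<in> trace_perp U \<Longrightarrow> v \<in> trace_perp U \<Longrightarrow> u + v \<in> trace_perp U"
  by (auto simp: trace_perp_def distrib_left rel_trace_add)

lemma zero_in_trace_perp: "0 \<in> trace_perp U"
  by (simp add: trace_perp_def)

lemma trace_perp_antimono: "U \<subseteq> V \<Longrightarrow> trace_perp V \<subseteq> trace_perp U"
  by (auto simp: trace_perp_def)

lemma trace_perp_trace_perp:
  assumes add_closed: "\<And>u v. u \<in> U \<Longrightarrow> v \<in> U \<Longrightarrow> u + v \<in> U" and "0 \<in> U"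
  shows "trace_perp (trace_perp U) = U"
proof -
  have "card U * card (trace_perp U) = card (trace_perp (trace_perp U)) * card (trace_perp U)"
    using card_mult_card_trace_perp[OF assms]
      card_mult_card_trace_perp[OF trace_perp_add_closed zero_in_trace_perp, of U]
    by (simp add: mult.commute)
  moreover have "card (trace_perp U) > 0"
    using zero_in_trace_perp[of U] by (auto simp: card_gt_0_iff)
  ultimately have "card U = card (trace_perp (trace_perp U))" by (metis mult_right_cancel not_gr0)
  moreover have "U \<subseteq> trace_perp (trace_perp U)" by (auto simp: trace_perp_def mult.commute)
  ultimately show ?thesis by (metis card_subset_eq finite)
qed

lemma rel_trace_self_adjoint:
  assumes "g * r = N"
  shows "tr (rel_trace g r w * z) = tr (w * rel_trace g r (z::'a))"
proof -
  have "rel_trace g r z = rel_trace g r z ^ 2 ^ g"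
    using rel_trace_in_frob_fix[OF assms] by simp
  also have "\<dots> = (\<Sum>i<r. z ^ 2 ^ (g * Suc i))"
    unfolding rel_trace_def frob_sum
    by (rule sum.cong) (simp_all flip: power2_add_exp add: add.commute)
  also have "\<dots> = (\<Sum>i<r. z ^ 2 ^ (g * (r - i)))"
    by (subst sum.nat_diff_reindex[symmetric]) (simp add: Suc_diff_Suc)
  finally have z: "rel_trace g r z = (\<Sum>i<r. z ^ 2 ^ (g * (r - i)))" .
  have "tr (w ^ 2 ^ (g * i) * z) = tr (w * z ^ 2 ^ (g * (r - i)))" if "i < r" for i
  proof -
    have "g * (r - i) + g * i = N" using that assms by (simp flip: add_mult_distrib2)
    then have "tr (w * z ^ 2 ^ (g * (r - i))) = tr ((w * z ^ 2 ^ (g * (r - i))) ^ 2 ^ (g * i))"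
      by (simp only: trace_frob)
    also have "\<dots> = tr (w ^ 2 ^ (g * i) * z ^ 2 ^ N)"
      by (simp add: power_mult_distrib flip: power2_add_exp \<open>g * (r - i) + g * i = N\<close>)
    finally show ?thesis by (simp add: power_2_N)
  qed
  then have "tr (rel_trace g r w * z) = (\<Sum>i<r. tr (w * z ^ 2 ^ (g * (r - i))))"
    by (simp add: rel_trace_def[of g r] sum_distrib_right rel_trace_sum)
  also have "\<dots> = tr (w * rel_trace g r z)"
    by (simp add: z sum_distrib_left rel_trace_sum)
  finally show ?thesis .
qed

lemma trace_lin2_poly_adjoint: "tr (lin2_poly M c x * y) = tr (x * adjoint2 M c (y::'a))"
proof -
  have "tr (x * inv (\<lambda>y::'a. y ^ 2 ^ j) (c j * y)) = tr (c j * x ^ 2 ^ j * y)" for j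
  proof -
    have "tr (x * inv (\<lambda>y::'a. y ^ 2 ^ j) (c j * y))
        = tr ((x * inv (\<lambda>y::'a. y ^ 2 ^ j) (c j * y)) ^ 2 ^ j)"
      by (rule trace_frob[symmetric])
    then show ?thesis by (simp add: power_mult_distrib frob_inv algebra_simps)
  qed
  then show ?thesis
    by (simp add: lin2_poly_def adjoint2_def sum_distrib_right sum_distrib_left rel_trace_sum)
qed

lemma rel_trace_eq_0_iff:
  assumes "g > 0" "g * r = N"
  shows "rel_trace g r (w::'a) = 0 \<longleftrightarrow> w \<in> trace_perp (frob_fix g)"
proof
  assume "rel_trace g r w = 0"
  then have tr_0: "tr (rel_trace g r z * w) = 0" for z
    using rel_trace_self_adjoint[OF assms(2), of z w] by simp
  show "w \<in> trace_perp (frob_fix g)"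
  proof (unfold trace_perp_def, intro CollectI ballI)
    fix u :: 'a
    assume "u \<in> frob_fix g"
    then have "u \<in> range (rel_trace g r)" by (simp only: range_rel_trace(1)[OF assms])
    then obtain z where "u = rel_trace g r z" by blast
    then show "tr (u * w) = 0" using tr_0 by simp
  qed
next
  assume "w \<in> trace_perp (frob_fix g)"
  then have "tr (rel_trace g r z * w) = 0" for z
    using rel_trace_in_frob_fix[OF assms(2)] by (simp add: trace_perp_def)
  then have "tr (rel_trace g r w * z) = 0" for z
    using rel_trace_self_adjoint[OF assms(2), of w z] by (simp add: mult.commute)
  then show "rel_trace g r w = 0" by (rule trace_form_nondegenerate)
qed

text \<open>Both kernels are trace-orthogonal complements: of \<open>G\<close> applied to the fixed field of the
  \<open>g\<^sub>2\<close>-th Frobenius power, and of the fixed field of the \<open>g\<^sub>1\<close>-th one.\<close>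
lemma kernel_subset_iff_image_superset:
  fixes G G' :: "'a \<Rightarrow> 'a"
  assumes add: "\<And>x y. G (x + y) = G x + G y"
    and adj: "\<And>x y. tr (G x * y) = tr (x * G' y)"
    and "g\<^sub>1 > 0" "g\<^sub>1 * r\<^sub>1 = N" and "g\<^sub>2 > 0" "g\<^sub>2 * r\<^sub>2 = N"
  shows "{y. rel_trace g\<^sub>2 r\<^sub>2 (G' y) = 0} \<subseteq> {y. rel_trace g\<^sub>1 r\<^sub>1 y = 0}
    \<longleftrightarrow> frob_fix g\<^sub>1 \<subseteq> G ` frob_fix g\<^sub>2"
proof -
  let ?A = "frob_fix g\<^sub>1 :: 'a set" and ?B = "G ` frob_fix g\<^sub>2"
  have "G 0 = 0" using add[of 0 0] by simp
  moreover have "(0::'a) \<in> frob_fix g\<^sub>2" by (simp add: power_0_left)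
  ultimately have "0 \<in> ?B" by (metis image_eqI)
  have B_add_closed: "u + v \<in> ?B" if uv: "u \<in> ?B" "v \<in> ?B" for u v
  proof -
    obtain x y where "x \<in> frob_fix g\<^sub>2" "y \<in> frob_fix g\<^sub>2" "u = G x" "v = G y"
      using uv by blast
    then have "x + y \<in> frob_fix g\<^sub>2" "u + v = G (x + y)" by (simp_all add: frob_add add)
    then show ?thesis by blast
  qed
  have "rel_trace g\<^sub>2 r\<^sub>2 (G' y) = 0 \<longleftrightarrow> y \<in> trace_perp ?B" for y
    using adj by (simp add: rel_trace_eq_0_iff[OF assms(5,6)] trace_perp_def)
  moreover have "rel_trace g\<^sub>1 r\<^sub>1 y = 0 \<longleftrightarrow> y \<in> trace_perp ?A" for y
    by (rule rel_trace_eq_0_iff[OF assms(3,4)])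
  moreover have "trace_perp ?B \<subseteq> trace_perp ?A \<longleftrightarrow> ?A \<subseteq> ?B"
  proof
    assume "trace_perp ?B \<subseteq> trace_perp ?A"
    then have "trace_perp (trace_perp ?A) \<subseteq> trace_perp (trace_perp ?B)"
      by (rule trace_perp_antimono)
    moreover have "trace_perp (trace_perp ?A) = ?A"
      by (rule trace_perp_trace_perp[OF frob_fix_add]) (simp_all add: power_0_left)
    moreover have "trace_perp (trace_perp ?B) = ?B"
      by (rule trace_perp_trace_perp[OF B_add_closed \<open>0 \<in> ?B\<close>])
    ultimately show "?A \<subseteq> ?B" by simp
  qed (rule trace_perp_antimono)
  ultimately show ?thesis by blast
qed

lemma frob_fix_subset_imp_dvd:
  assumes "e > 0" "e dvd N" "frob_fix e \<subseteq> (frob_fix h :: 'a set)"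
  shows "e dvd h"
proof -
  have "frob_fix e = (frob_fix (gcd e h) :: 'a set)"
    using assms(3) frob_fix_Int[of e h] by auto
  then have "2 ^ e \<le> (2::nat) ^ gcd e h"
    using card_frob_fix[OF assms(1,2)] card_frob_fix_le[of "gcd e h"] assms(1) by simp
  moreover have "gcd e h \<le> e" using assms(1) by (simp add: gcd_le1_nat)
  ultimately have "gcd e h = e" by simp
  then show ?thesis by (metis gcd_dvd2)
qed

subsection \<open>The maps \<open>w \<mapsto> w ^ (2 ^ s - 1)\<close>\<close>

text \<open>The kernel of \<open>w \<mapsto> w ^ (2 ^ s - 1)\<close> on the units of \<open>frob_fix g\<close> consists of the
  units of \<open>frob_fix (gcd s g)\<close>, and its fibres are cosets of the kernel.\<close>
lemma card_power_image_frob_fix_units: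
  assumes "g > 0" "g dvd N"
  shows "card ((\<lambda>w. w ^ (2 ^ s - 1)) ` (frob_fix g - {0} :: 'a set))
    = (2 ^ g - 1) div (2 ^ gcd s g - 1)"
proof -
  define h where "h = gcd s g"
  define D where "D = 2 ^ s - (1::nat)"
  let ?A = "frob_fix g - {0} :: 'a set" and ?K = "frob_fix h - {0} :: 'a set"
  have "h > 0" using assms(1) by (simp add: h_def)
  have "h dvd N" unfolding h_def using assms(2) by (rule dvd_trans[OF gcd_dvd2])
  have "(1::nat) < 2 ^ h" using \<open>h > 0\<close> by (intro one_less_power) auto
  have card_A: "card ?A = 2 ^ g - 1"
    using card_frob_fix[OF assms] by (simp add: card_Diff_singleton)
  have card_K: "card ?K = 2 ^ h - 1"
    using card_frob_fix[OF \<open>h > 0\<close> \<open>h dvd N\<close>] by (simp add: card_Diff_singleton)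
  have K_iff: "\<mu> \<in> ?K \<longleftrightarrow> \<mu> \<in> ?A \<and> \<mu> ^ D = 1" for \<mu>
    using power2_minus_1_eq_1_frob_fix_iff[of \<mu> s g] by (auto simp: D_def h_def)
  have fibre: "{y \<in> ?A. y ^ D = x ^ D} = (\<lambda>\<mu>. x * \<mu>) ` ?K" if "x \<in> ?A" for x
  proof (intro equalityI subsetI)
    fix y assume "y \<in> {y \<in> ?A. y ^ D = x ^ D}"
    then have "y / x \<in> ?A" "(y / x) ^ D = 1"
      using that by (auto simp: power_divide)
    then have "y / x \<in> ?K" using K_iff by blast
    moreover have "y = x * (y / x)" using that by simp
    ultimately show "y \<in> (\<lambda>\<mu>. x * \<mu>) ` ?K" by blast
  next
    fix y assume "y \<in> (\<lambda>\<mu>. x * \<mu>) ` ?K"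
    then obtain \<mu> where "y = x * \<mu>" "\<mu> \<in> ?A" "\<mu> ^ D = 1" using K_iff by blast
    then show "y \<in> {y \<in> ?A. y ^ D = x ^ D}"
      using that by (auto simp: power_mult_distrib)
  qed
  have "card ?A = card ?K * card ((\<lambda>w. w ^ D) ` ?A)"
  proof (rule card_eq_card_fibre_mult_card_image)
    fix x assume "x \<in> ?A"
    then have "inj_on (\<lambda>\<mu>. x * \<mu>) ?K" by (intro inj_onI) simp
    then show "card {y \<in> ?A. y ^ D = x ^ D} = card ?K"
      by (simp only: fibre[OF \<open>x \<in> ?A\<close>] card_image)
  qed simp
  then show ?thesis
    using card_A card_K \<open>1 < 2 ^ h\<close> by (simp add: D_def h_def)
qed

lemma power_image_frob_fix_units:
  assumes "g > 0" "g dvd N"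
  shows "(\<lambda>w. w ^ (2 ^ s - 1)) ` (frob_fix g - {0})
    = {c::'a. c ^ ((2 ^ g - 1) div (2 ^ gcd s g - 1)) = 1}"
proof -
  define h where "h = gcd s g"
  define D where "D = 2 ^ s - (1::nat)"
  define E where "E = (2 ^ g - 1) div (2 ^ h - (1::nat))"
  let ?A = "frob_fix g - {0} :: 'a set" and ?R = "{c::'a. c ^ E = 1}"
  have "(2 ^ h - 1) dvd (2 ^ g - (1::nat))"
    unfolding h_def by (rule power2_minus_1_dvd) simp
  then have g_eq: "2 ^ g - 1 = (2 ^ h - 1) * E" by (simp add: E_def)
  have "E > 0" unfolding E_def h_def by (rule power2_minus_1_div_gcd_pos[OF assms(1)])
  have "(2 ^ h - 1) dvd D"
    unfolding D_def h_def by (rule power2_minus_1_dvd) simp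
  then obtain k where "D = (2 ^ h - 1) * k" by blast
  then have "D * E = (2 ^ h - 1) * E * k" by (simp only: ac_simps)
  then have D_eq: "D * E = (2 ^ g - 1) * k" by (simp only: g_eq)
  have image_subset: "(\<lambda>w. w ^ D) ` ?A \<subseteq> ?R"
  proof (rule image_subsetI)
    fix w :: 'a assume "w \<in> ?A"
    then have "w ^ (2 ^ g - 1) = 1" using power2_minus_1_eq_1_iff by blast
    moreover have "(w ^ D) ^ E = (w ^ (2 ^ g - 1)) ^ k" by (simp only: power_mult[symmetric] D_eq)
    ultimately show "w ^ D \<in> ?R" by simp
  qed
  moreover have "card ?R \<le> card ((\<lambda>w. w ^ D) ` ?A)"
    using card_roots_of_unity_le[OF \<open>E > 0\<close>] card_power_image_frob_fix_units[OF assms, of s]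
    by (simp add: D_def E_def h_def)
  ultimately have "(\<lambda>w. w ^ D) ` ?A = ?R"
    using card_mono[OF _ image_subset] by (intro card_subset_eq) auto
  then show ?thesis by (simp add: D_def E_def h_def)
qed

lemma power_roots_in_frob_fix_if_root_in:
  fixes v :: 'a
  assumes "gcd s g dvd h" "h dvd g" "v \<in> frob_fix h" "v \<noteq> 0"
  shows "\<forall>w \<in> frob_fix g - {0}. w ^ (2 ^ s - 1) = v ^ (2 ^ s - 1) \<longrightarrow> w \<in> frob_fix h"
proof (intro ballI impI)
  fix w :: 'a
  assume w: "w \<in> frob_fix g - {0}" "w ^ (2 ^ s - 1) = v ^ (2 ^ s - 1)"
  have "v \<in> frob_fix g" using assms(3) frob_fix_mono[OF assms(2)] by blast
  then have "w / v \<in> frob_fix g" "w / v \<noteq> 0" "(w / v) ^ (2 ^ s - 1) = 1"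
    using w assms(4) by (auto simp: power_divide)
  then have "w / v \<in> frob_fix (gcd s g)"
    using power2_minus_1_eq_1_frob_fix_iff[of "w / v" s g] by simp
  then have "w / v \<in> frob_fix h" using frob_fix_mono[OF assms(1)] by blast
  then have "w / v * v \<in> frob_fix h" using assms(3) by (rule frob_fix_mult)
  then show "w \<in> frob_fix h" using assms(4) by simp
qed

lemma gcd_dvd_if_power_roots_in_frob_fix:
  fixes w\<^sub>0 :: 'a
  assumes "g > 0" "g dvd N" "w\<^sub>0 \<in> frob_fix g" "w\<^sub>0 \<noteq> 0"
    and roots: "\<forall>w \<in> frob_fix g - {0}. w ^ (2 ^ s - 1) = w\<^sub>0 ^ (2 ^ s - 1) \<longrightarrow> w \<in> frob_fix h"
  shows "gcd s g dvd h"
proof -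
  have "w\<^sub>0 \<in> frob_fix h" using roots assms(3,4) by blast
  have unit_in_h: "\<mu> \<in> frob_fix h" if "\<mu> \<in> frob_fix (gcd s g)" "\<mu> \<noteq> 0" for \<mu> :: 'a
  proof -
    have "\<mu> ^ (2 ^ s - 1) = 1" "\<mu> \<in> frob_fix g"
      using power2_minus_1_eq_1_frob_fix_iff[of \<mu> s g] that by simp_all
    then have "w\<^sub>0 * \<mu> \<in> frob_fix g - {0}" "(w\<^sub>0 * \<mu>) ^ (2 ^ s - 1) = w\<^sub>0 ^ (2 ^ s - 1)"
      using assms(3,4) that(2) by (simp_all add: power_mult_distrib)
    then have "w\<^sub>0 * \<mu> \<in> frob_fix h" using roots by blast
    then have "w\<^sub>0 * \<mu> / w\<^sub>0 \<in> frob_fix h"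
      using \<open>w\<^sub>0 \<in> frob_fix h\<close> by (rule frob_fix_divide)
    then show ?thesis using assms(4) by simp
  qed
  have "frob_fix (gcd s g) \<subseteq> (frob_fix h :: 'a set)"
  proof
    fix \<mu> :: 'a assume "\<mu> \<in> frob_fix (gcd s g)"
    then show "\<mu> \<in> frob_fix h"
      using unit_in_h by (cases "\<mu> = 0") (simp_all add: power_0_left)
  qed
  moreover have "gcd s g > 0" "gcd s g dvd N"
    using assms(1,2) by (auto intro: dvd_trans[OF gcd_dvd2])
  ultimately show ?thesis using frob_fix_subset_imp_dvd by blast
qed

lemma power_roots_in_frob_fix_iff:
  fixes c :: 'a and s :: nat
  assumes "h > 0" "h dvd g" "g > 0" "g dvd N" "c \<noteq> 0"
  defines "e \<equiv> gcd s g"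
  shows "(\<forall>w \<in> frob_fix g - {0}. w ^ (2 ^ s - 1) = c \<longrightarrow> w \<in> frob_fix h)
    \<longleftrightarrow> c ^ ((2 ^ g - 1) div (2 ^ e - 1)) \<noteq> 1
      \<or> (e dvd h \<and> c ^ ((2 ^ h - 1) div (2 ^ e - 1)) = 1)"
proof -
  let ?P = "\<lambda>w::'a. w ^ (2 ^ s - 1)"
  have "h dvd N" using assms(2,4) by (rule dvd_trans)
  have image_h: "c \<in> ?P ` (frob_fix h - {0}) \<longleftrightarrow> c ^ ((2 ^ h - 1) div (2 ^ e - 1)) = 1"
    if "e dvd h"
  proof -
    have "gcd s h = e"
      using that assms(2) unfolding e_def
      by (meson dvd_antisym dvd_trans gcd_dvd1 gcd_dvd2 gcd_greatest)
    then show ?thesis using power_image_frob_fix_units[OF assms(1) \<open>h dvd N\<close>, of s] by simp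
  qed
  have image_g: "?P ` (frob_fix g - {0}) = {c. c ^ ((2 ^ g - 1) div (2 ^ e - 1)) = 1}"
    unfolding e_def by (rule power_image_frob_fix_units[OF assms(3,4)])
  show ?thesis
  proof (cases "c \<in> ?P ` (frob_fix g - {0})")
    case False
    then show ?thesis using image_g by auto
  next
    case True
    then obtain w\<^sub>0 where w\<^sub>0: "w\<^sub>0 \<in> frob_fix g" "w\<^sub>0 \<noteq> 0" "c = ?P w\<^sub>0" by blast
    have "(\<forall>w \<in> frob_fix g - {0}. ?P w = c \<longrightarrow> w \<in> frob_fix h)
        \<longleftrightarrow> e dvd h \<and> c \<in> ?P ` (frob_fix h - {0})"
    proof
      assume roots: "\<forall>w \<in> frob_fix g - {0}. ?P w = c \<longrightarrow> w \<in> frob_fix h"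
      then have "w\<^sub>0 \<in> frob_fix h" using w\<^sub>0 by blast
      with w\<^sub>0 roots show "e dvd h \<and> c \<in> ?P ` (frob_fix h - {0})"
        unfolding e_def using gcd_dvd_if_power_roots_in_frob_fix[OF assms(3,4) w\<^sub>0(1,2)] by blast
    next
      assume "e dvd h \<and> c \<in> ?P ` (frob_fix h - {0})"
      then show "\<forall>w \<in> frob_fix g - {0}. ?P w = c \<longrightarrow> w \<in> frob_fix h"
        unfolding e_def using power_roots_in_frob_fix_if_root_in[OF _ assms(2)] by blast
    qed
    then show ?thesis using True image_g image_h by auto
  qed
qed

subsection \<open>Coefficients in F_(q^2)\<close>

lemma power2_power_quotient_frob_fix:
  fixes a :: 'a and s :: nat
  assumes "g > 0" "g dvd N" "a \<in> frob_fix g"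
  defines "E \<equiv> (2 ^ g - 1) div (2 ^ gcd s g - 1)"
  shows "(a ^ 2 ^ s) ^ E = a ^ E"
proof (cases "a = 0")
  case True
  then show ?thesis by (simp add: power_0_left)
next
  case False
  then have "a ^ (2 ^ s - 1) \<in> (\<lambda>w. w ^ (2 ^ s - 1)) ` (frob_fix g - {0})"
    using assms(3) by blast
  then have "(a ^ (2 ^ s - 1)) ^ E = 1"
    unfolding power_image_frob_fix_units[OF assms(1,2)] E_def by simp
  moreover have "a ^ 2 ^ s = a ^ (2 ^ s - 1) * a" using power_minus_mult[of "2 ^ s" a] by simp
  ultimately show ?thesis by (simp add: power_mult_distrib)
qed

lemma frob_fix_double_not_subset:
  assumes "m > 0" "2 * m dvd N"
  shows "\<exists>w::'a. w \<in> frob_fix (2 * m) \<and> w \<notin> frob_fix m"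
proof (rule ccontr)
  assume "\<nexists>w::'a. w \<in> frob_fix (2 * m) \<and> w \<notin> frob_fix m"
  then have "frob_fix (2 * m) \<subseteq> (frob_fix m :: 'a set)" by blast
  moreover have "2 * m > 0" using assms(1) by simp
  ultimately have "2 * m dvd m" using frob_fix_subset_imp_dvd assms(2) by blast
  then show False using assms(1) by (auto dest: dvd_imp_le)
qed

lemma unit_solutions_in_frob_fix_half_iff:
  fixes a b :: 'a and s :: nat
  assumes "m > 0" "2 * m dvd N" and hq: "q = 2 ^ m"
    and a: "a \<in> frob_fix (2 * m)" and "a \<noteq> 0" "b \<noteq> 0"
  defines "e \<equiv> gcd s (2 * m)"
  shows "(\<forall>w \<in> frob_fix (2 * m). (a * w) ^ 2 ^ s = b * w \<longrightarrow> w \<in> frob_fix m)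
    \<longleftrightarrow> a ^ ((q\<^sup>2 - 1) div (2 ^ e - 1)) \<noteq> b ^ ((q\<^sup>2 - 1) div (2 ^ e - 1))
      \<or> (e dvd m \<and> a ^ ((2 ^ s * (q - 1)) div (2 ^ e - 1)) = b ^ ((q - 1) div (2 ^ e - 1)))"
proof -
  define E where "E = (2 ^ (2 * m) - 1) div (2 ^ e - (1::nat))"
  define E' where "E' = (2 ^ m - 1) div (2 ^ e - (1::nat))"
  define c where "c = b / a ^ 2 ^ s"
  have "c \<noteq> 0" using assms(5,6) by (simp add: c_def)
  have "q\<^sup>2 = 2 ^ (2 * m)" by (simp add: hq power_mult[symmetric] mult.commute)
  then have R2_iff: "a ^ ((q\<^sup>2 - 1) div (2 ^ e - 1)) \<noteq> b ^ ((q\<^sup>2 - 1) div (2 ^ e - 1))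
      \<longleftrightarrow> c ^ E \<noteq> 1"
    using power2_power_quotient_frob_fix[OF _ assms(2) a, where s = s] assms(1,5)
    by (auto simp: E_def e_def c_def power_divide)
  have R3_iff: "a ^ ((2 ^ s * (q - 1)) div (2 ^ e - 1)) = b ^ ((q - 1) div (2 ^ e - 1))
      \<longleftrightarrow> c ^ E' = 1" if "e dvd m"
  proof -
    have "(2 ^ e - 1) dvd (q - (1::nat))" unfolding hq by (rule power2_minus_1_dvd[OF that])
    then have "(2 ^ s * (q - 1)) div (2 ^ e - 1) = 2 ^ s * E'"
      by (simp add: E'_def hq div_mult_swap)
    then show ?thesis using assms(5,6) by (auto simp: c_def power_divide power_mult E'_def hq)
  qed
  have "(\<forall>w \<in> frob_fix (2 * m). (a * w) ^ 2 ^ s = b * w \<longrightarrow> w \<in> frob_fix m)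
      \<longleftrightarrow> (\<forall>w \<in> frob_fix (2 * m) - {0}. w ^ (2 ^ s - 1) = c \<longrightarrow> w \<in> frob_fix m)"
    using frob_linear_eq_iff_power_root[OF assms(5), where s = s and b = b]
    by (auto simp: c_def power_0_left)
  also have "\<dots> \<longleftrightarrow> c ^ E \<noteq> 1 \<or> (e dvd m \<and> c ^ E' = 1)"
    unfolding E_def E'_def e_def
    by (rule power_roots_in_frob_fix_iff) (use assms \<open>c \<noteq> 0\<close> in auto)
  finally show ?thesis using R2_iff R3_iff by blast
qed

lemma solutions_in_frob_fix_half_iff:
  fixes a b :: 'a and s :: nat
  assumes "m > 0" "2 * m dvd N" and hq: "q = 2 ^ m"
    and a: "a \<in> frob_fix (2 * m)"
  defines "e \<equiv> gcd s (2 * m)"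
  shows "(\<forall>w \<in> frob_fix (2 * m). (a * w) ^ 2 ^ s = b * w \<longrightarrow> w \<in> frob_fix m)
    \<longleftrightarrow> a ^ ((q\<^sup>2 - 1) div (2 ^ e - 1)) \<noteq> b ^ ((q\<^sup>2 - 1) div (2 ^ e - 1))
      \<or> (e dvd m \<and> a \<noteq> 0 \<and> b \<noteq> 0
         \<and> a ^ ((2 ^ s * (q - 1)) div (2 ^ e - 1)) = b ^ ((q - 1) div (2 ^ e - 1)))"
proof (cases "a = 0 \<or> b = 0")
  case True
  have "(q\<^sup>2 - 1) div (2 ^ e - 1) > 0"
    using power2_minus_1_div_gcd_pos[of "2 * m" s] assms(1)
    by (simp add: e_def hq power_mult[symmetric] mult.commute)
  then show ?thesis
    using True frob_fix_double_not_subset[OF assms(1,2)] by (auto simp: power_0_left)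
next
  case False
  then show ?thesis unfolding e_def
    using unit_solutions_in_frob_fix_half_iff[OF assms(1-4)] by auto
qed

lemma rel_trace_double_split:
  "rel_trace m (2 * r) (y::'a) = rel_trace (2 * m) r y + rel_trace (2 * m) r y ^ 2 ^ m"
proof (induction r)
  case (Suc r)
  let ?T = "rel_trace (2 * m) r y" and ?z = "y ^ 2 ^ (2 * m * r)"
  have "rel_trace m (2 * Suc r) y = rel_trace m (2 * r) y + ?z + ?z ^ 2 ^ m"
    by (simp add: rel_trace_def algebra_simps flip: power2_add_exp)
  also have "\<dots> = (?T + ?z) + (?T + ?z) ^ 2 ^ m"
    unfolding Suc.IH frob_add by (simp only: ac_simps)
  also have "?T + ?z = rel_trace (2 * m) (Suc r) y"
    by (simp add: rel_trace_def)
  finally show ?case .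
qed (simp add: rel_trace_def)

lemma trace_frob_linear_adjoint:
  assumes "s \<le> N"
  shows "tr ((a * x + b * x ^ 2 ^ s) * y) = tr (x * (a * y + (b * y) ^ 2 ^ (N - s)))"
proof -
  have "((b * y) ^ 2 ^ (N - s)) ^ 2 ^ s = b * y"
    using assms power_2_N by (simp flip: power2_add_exp)
  then have "(x * (b * y) ^ 2 ^ (N - s)) ^ 2 ^ s = x ^ 2 ^ s * (b * y)"
    by (simp only: power_mult_distrib[of x])
  also have "\<dots> = b * x ^ 2 ^ s * y" by (simp only: ac_simps)
  finally have "tr (b * x ^ 2 ^ s * y) = tr (x * (b * y) ^ 2 ^ (N - s))" by (metis trace_frob)
  then show ?thesis
    unfolding distrib_left distrib_right rel_trace_add by (simp only: ac_simps)
qed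

lemma frob_linear_adjoint_eq_0_iff:
  assumes "s \<le> N"
  shows "a * w + (b * w) ^ 2 ^ (N - s) = 0 \<longleftrightarrow> (a * w) ^ 2 ^ s = (b * w :: 'a)"
proof -
  have "a * w + (b * w) ^ 2 ^ (N - s) = 0 \<longleftrightarrow> a * w = (b * w) ^ 2 ^ (N - s)"
    by (rule eq_iff_add_eq_0[symmetric])
  also have "\<dots> \<longleftrightarrow> (a * w) ^ 2 ^ s = ((b * w) ^ 2 ^ (N - s)) ^ 2 ^ s"
    using frob_inj[of "a * w" s] by auto
  also have "((b * w) ^ 2 ^ (N - s)) ^ 2 ^ s = b * w"
    using assms power_2_N by (simp flip: power2_add_exp)
  finally show ?thesis .
qed

text \<open>The adjoint \<open>y \<mapsto> a y + (b y) ^ 2 ^ (N - s)\<close> of \<open>y \<mapsto> a y + b y ^ 2 ^ s\<close> commutes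
  with the trace onto \<open>frob_fix (2 * m)\<close> because \<open>a\<close> and \<open>b\<close> lie in it.\<close>
lemma frob_fix_subset_image_iff_kernel:
  fixes a b :: 'a
  assumes "m > 0" "2 * m * r = N" "s \<le> N"
    and a: "a \<in> frob_fix (2 * m)" and b: "b \<in> frob_fix (2 * m)"
  shows "frob_fix m \<subseteq> (\<lambda>y. a * y + b * y ^ 2 ^ s) ` frob_fix (2 * m)
    \<longleftrightarrow> (\<forall>w \<in> frob_fix (2 * m). (a * w) ^ 2 ^ s = b * w \<longrightarrow> w \<in> frob_fix m)"
proof -
  define G' where "G' y = a * y + (b * y) ^ 2 ^ (N - s)" for y :: 'a
  let ?T = "rel_trace (2 * m) r :: 'a \<Rightarrow> 'a"
  have add: "a * (x + y) + b * (x + y) ^ 2 ^ s = (a * x + b * x ^ 2 ^ s) + (a * y + b * y ^ 2 ^ s)"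
    for x y :: 'a by (simp add: frob_add algebra_simps)
  have "frob_fix m \<subseteq> (\<lambda>y. a * y + b * y ^ 2 ^ s) ` frob_fix (2 * m)
      \<longleftrightarrow> {y. ?T (G' y) = 0} \<subseteq> {y. rel_trace m (2 * r) y = 0}"
    unfolding G'_def
    by (rule kernel_subset_iff_image_superset[OF add trace_frob_linear_adjoint[OF assms(3)],
          symmetric])
      (use assms(1,2) in \<open>simp_all add: ac_simps\<close>)
  also have "\<dots> \<longleftrightarrow> (\<forall>y. G' (?T y) = 0 \<longrightarrow> ?T y \<in> frob_fix m)"
  proof -
    have "?T (G' y) = G' (?T y)" for y
      unfolding G'_def rel_trace_add rel_trace_frob rel_trace_scale[OF a] rel_trace_scale[OF b] ..
    moreover have "rel_trace m (2 * r) y = 0 \<longleftrightarrow> ?T y \<in> frob_fix m" for y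
      unfolding rel_trace_double_split eq_iff_add_eq_0[symmetric] by auto
    ultimately show ?thesis by (simp add: subset_eq)
  qed
  also have "\<dots> \<longleftrightarrow> (\<forall>w \<in> range ?T. G' w = 0 \<longrightarrow> w \<in> frob_fix m)"
    by blast
  also have "range ?T = frob_fix (2 * m)"
    by (rule range_rel_trace(1)) (use assms(1,2) in auto)
  finally show ?thesis
    by (simp add: G'_def frob_linear_adjoint_eq_0_iff[OF assms(3)])
qed

subsection \<open>Coefficients outside F_(q^2)\<close>

lemma frob_power_add: "(x + y) ^ (2 ^ m) ^ j = x ^ (2 ^ m) ^ j + (y::'a) ^ (2 ^ m) ^ j"
  by (simp add: frob_add flip: power_mult)

text \<open>Cramer's rule for the system \<open>u = a y + b Y\<close>, \<open>u = a' y + b' Y\<close> in the unknowns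
  \<open>y\<close> and \<open>Y = y ^ 2 ^ s\<close>, where primes denote \<open>q\<^sup>2\<close>-th powers: the second equation is the
  \<open>q\<^sup>2\<close>-th power of the first.\<close>
lemma preimage_by_cramer:
  fixes a b u y :: 'a
  assumes hq: "q = 2 ^ m" and u: "u ^ q = u" and y: "y ^ q\<^sup>2 = y"
    and u_eq: "u = a * y + b * y ^ 2 ^ s"
  defines "\<delta> \<equiv> a ^ q\<^sup>2 * b + a * b ^ q\<^sup>2"
  shows "\<delta> * y = u * (b ^ q\<^sup>2 + b)" and "\<delta> * y ^ 2 ^ s = u * (a ^ q\<^sup>2 + a)"
proof -
  let ?Y = "y ^ 2 ^ s"
  have Y: "?Y ^ q\<^sup>2 = ?Y" using y by (metis power_mult mult.commute)
  have "u = u ^ q\<^sup>2" using u by (simp add: power_exp_square)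
  also have "\<dots> = a ^ q\<^sup>2 * y + b ^ q\<^sup>2 * ?Y"
    using frob_power_add[of "a * y" "b * ?Y" m 2] y Y by (simp add: u_eq hq power_mult_distrib)
  finally have u_eq': "u = a ^ q\<^sup>2 * y + b ^ q\<^sup>2 * ?Y" .
  have "u * (b ^ q\<^sup>2 + b) = (a * y + b * ?Y) * b ^ q\<^sup>2 + (a ^ q\<^sup>2 * y + b ^ q\<^sup>2 * ?Y) * b"
    by (simp only: distrib_left mult.commute[of u] flip: u_eq u_eq')
  then have "u * (b ^ q\<^sup>2 + b) = \<delta> * y + (b * b ^ q\<^sup>2 * ?Y + b * b ^ q\<^sup>2 * ?Y)"
    by (simp add: \<delta>_def algebra_simps two_eq_0)
  moreover have "u * (a ^ q\<^sup>2 + a) = (a * y + b * ?Y) * a ^ q\<^sup>2 + (a ^ q\<^sup>2 * y + b ^ q\<^sup>2 * ?Y) * a"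
    by (simp only: distrib_left mult.commute[of u] flip: u_eq u_eq')
  then have "u * (a ^ q\<^sup>2 + a) = \<delta> * ?Y + (a * a ^ q\<^sup>2 * y + a * a ^ q\<^sup>2 * y)"
    by (simp add: \<delta>_def algebra_simps two_eq_0)
  ultimately show "\<delta> * y = u * (b ^ q\<^sup>2 + b)" and "\<delta> * ?Y = u * (a ^ q\<^sup>2 + a)"
    by simp_all
qed

lemma delta_nonzero:
  fixes a b y :: 'a
  assumes hq: "q = 2 ^ m" and y: "y ^ q\<^sup>2 = y" and one: "a * y + b * y ^ 2 ^ s = 1"
    and outside: "\<not> (a ^ q\<^sup>2 = a \<and> b ^ q\<^sup>2 = b)"
  shows "a ^ q\<^sup>2 * b + a * b ^ q\<^sup>2 \<noteq> 0"
proof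
  assume \<delta>: "a ^ q\<^sup>2 * b + a * b ^ q\<^sup>2 = 0"
  show False
  proof (cases "b = 0")
    case True
    then have "a * y = 1" using one by simp
    moreover from this have "y \<noteq> 0" by auto
    ultimately have "a = 1 / y" by (simp add: eq_divide_eq)
    then have "a ^ q\<^sup>2 = a" using y by (simp add: power_divide)
    with True outside show False by (simp add: hq)
  next
    case False
    define c where "c = a / b"
    have "a ^ q\<^sup>2 * b = a * b ^ q\<^sup>2" using \<delta> eq_iff_add_eq_0 by blast
    then have c: "c ^ q\<^sup>2 = c" using False by (simp add: c_def power_divide divide_simps)
    have "(y ^ 2 ^ s) ^ q\<^sup>2 = y ^ 2 ^ s" using y by (metis power_mult mult.commute)
    then have "(c * y + y ^ 2 ^ s) ^ q\<^sup>2 = c * y + y ^ 2 ^ s"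
      using frob_power_add[of "c * y" "y ^ 2 ^ s" m 2] c y by (simp add: hq power_mult_distrib)
    moreover have "c * y + y ^ 2 ^ s = 1 / b" using one False by (simp add: c_def field_simps)
    ultimately have "b ^ q\<^sup>2 = b" by (simp add: power_divide)
    moreover have "a = c * b" using False by (simp add: c_def)
    ultimately show False using c outside by (simp add: power_mult_distrib)
  qed
qed

lemma conditions_from_preimage_of_one:
  fixes a b \<delta> y :: 'a
  assumes hq: "q = 2 ^ m" and y: "y ^ q\<^sup>2 = y"
    and b: "\<delta> * y = b ^ q\<^sup>2 + b" and a: "\<delta> * y ^ q = a ^ q\<^sup>2 + a"
  shows "\<delta> ^ q * (a ^ q\<^sup>2 + a) + \<delta> * (b ^ q ^ 3 + b ^ q) = 0"
    and "\<delta> ^ q * (b ^ q\<^sup>2 + b) + \<delta> * (a ^ q ^ 3 + a ^ q) = 0"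
proof -
  have power_q: "(x + z) ^ q = x ^ q + z ^ q" for x z :: 'a
    using frob_add[of x z m] by (simp add: hq)
  have b3: "b ^ q ^ 3 + b ^ q = \<delta> ^ q * y ^ q"
    using b by (simp add: power_exp_cube power_q flip: power_mult_distrib)
  have "a ^ q ^ 3 + a ^ q = (a ^ q\<^sup>2 + a) ^ q" by (simp add: power_exp_cube power_q)
  also have "\<dots> = (\<delta> * y ^ q) ^ q" using a by simp
  also have "\<dots> = \<delta> ^ q * y" using y by (simp add: power_mult_distrib power_exp_square)
  finally have a3: "a ^ q ^ 3 + a ^ q = \<delta> ^ q * y" .
  show "\<delta> ^ q * (a ^ q\<^sup>2 + a) + \<delta> * (b ^ q ^ 3 + b ^ q) = 0"
    and "\<delta> ^ q * (b ^ q\<^sup>2 + b) + \<delta> * (a ^ q ^ 3 + a ^ q) = 0"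
    unfolding a3 b3 a[symmetric] b[symmetric] by (simp_all add: ac_simps)
qed

lemma frob_fix_subset_imp_eq:
  assumes "m > 0" "m dvd N" "0 < s" "s < 2 * m" "frob_fix m \<subseteq> (frob_fix s :: 'a set)"
  shows "s = m"
proof -
  have "m dvd s" using frob_fix_subset_imp_dvd assms(1,2,5) by blast
  then obtain k where k: "s = m * k" by blast
  with assms(3,4) have "0 < k" "k < 2" by (simp_all add: mult.commute[of 2])
  then show ?thesis using k by (simp add: less_2_cases_iff)
qed

lemma conditions_if_frob_fix_subset_image:
  fixes a b :: 'a
  assumes "m > 0" "m dvd N" and hq: "q = 2 ^ m" and "0 < s" "s < 2 * m"
    and outside: "\<not> (a ^ q\<^sup>2 = a \<and> b ^ q\<^sup>2 = b)"
    and subset: "frob_fix m \<subseteq> (\<lambda>y. a * y + b * y ^ 2 ^ s) ` frob_fix (2 * m)"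
  defines "\<delta> \<equiv> a ^ q\<^sup>2 * b + a * b ^ q\<^sup>2"
  shows "s = m \<and> a ^ q\<^sup>2 \<noteq> a \<and> \<delta> \<noteq> 0
    \<and> \<delta> ^ q * (a ^ q\<^sup>2 + a) + \<delta> * (b ^ q ^ 3 + b ^ q) = 0
    \<and> \<delta> ^ q * (b ^ q\<^sup>2 + b) + \<delta> * (a ^ q ^ 3 + a ^ q) = 0"
proof -
  have q2: "q\<^sup>2 = 2 ^ (2 * m)" by (simp add: hq power_mult[symmetric] mult.commute)
  have sol: "\<exists>y. y ^ q\<^sup>2 = y \<and> u = a * y + b * y ^ 2 ^ s" if "u ^ q = u" for u :: 'a
  proof -
    have "u \<in> frob_fix m" using that by (simp add: hq)
    then obtain y where "y \<in> frob_fix (2 * m)" "u = a * y + b * y ^ 2 ^ s" using subset by blast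
    then show ?thesis unfolding q2 by blast
  qed
  then obtain y\<^sub>1 where y\<^sub>1: "y\<^sub>1 ^ q\<^sup>2 = y\<^sub>1" "a * y\<^sub>1 + b * y\<^sub>1 ^ 2 ^ s = 1"
    by (metis power_one)
  have "\<delta> \<noteq> 0" unfolding \<delta>_def by (rule delta_nonzero[OF hq y\<^sub>1 outside])
  have k\<^sub>1: "\<delta> * y\<^sub>1 = b ^ q\<^sup>2 + b" "\<delta> * y\<^sub>1 ^ 2 ^ s = a ^ q\<^sup>2 + a"
    using preimage_by_cramer[OF hq _ y\<^sub>1(1), of 1 a b s] y\<^sub>1(2) by (simp_all add: \<delta>_def)
  have "a ^ q\<^sup>2 \<noteq> a"
  proof
    assume "a ^ q\<^sup>2 = a"
    then have "y\<^sub>1 = 0" using k\<^sub>1(2) \<open>\<delta> \<noteq> 0\<close> by simp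
    then have "b ^ q\<^sup>2 = b" using k\<^sub>1(1) eq_iff_add_eq_0 by simp
    with \<open>a ^ q\<^sup>2 = a\<close> outside show False by simp
  qed
  then have "y\<^sub>1 ^ 2 ^ s \<noteq> 0" using k\<^sub>1(2) eq_iff_add_eq_0 by force
  have "u ^ 2 ^ s = u" if u: "u ^ q = u" for u :: 'a
  proof -
    obtain y where y: "y ^ q\<^sup>2 = y" "u = a * y + b * y ^ 2 ^ s" using sol[OF u] by blast
    have "\<delta> * y = \<delta> * (u * y\<^sub>1)" "\<delta> * y ^ 2 ^ s = \<delta> * (u * y\<^sub>1 ^ 2 ^ s)"
      using preimage_by_cramer[OF hq u y] k\<^sub>1 by (simp_all add: \<delta>_def ac_simps)
    then have "y = u * y\<^sub>1" "y ^ 2 ^ s = u * y\<^sub>1 ^ 2 ^ s" using \<open>\<delta> \<noteq> 0\<close> by simp_all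
    then have "u ^ 2 ^ s * y\<^sub>1 ^ 2 ^ s = u * y\<^sub>1 ^ 2 ^ s" by (simp add: power_mult_distrib)
    then show ?thesis using \<open>y\<^sub>1 ^ 2 ^ s \<noteq> 0\<close> by simp
  qed
  then have "frob_fix m \<subseteq> (frob_fix s :: 'a set)" by (auto simp: hq)
  then have "s = m" using assms(1,2,4,5) frob_fix_subset_imp_eq by blast
  moreover from this have "\<delta> * y\<^sub>1 ^ q = a ^ q\<^sup>2 + a" using k\<^sub>1(2) by (simp add: hq)
  ultimately show ?thesis
    using conditions_from_preimage_of_one[OF hq y\<^sub>1(1) k\<^sub>1(1)] \<open>a ^ q\<^sup>2 \<noteq> a\<close> \<open>\<delta> \<noteq> 0\<close> by blast
qed

text \<open>With \<open>\<alpha> = (a ^ q\<^sup>2 + a) / \<delta>\<close> and \<open>\<beta> = (b ^ q\<^sup>2 + b) / \<delta>\<close> the two equations say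
  \<open>\<alpha> = \<beta> ^ q\<close> and \<open>\<beta> = \<alpha> ^ q\<close>, which makes \<open>u \<beta>\<close> a preimage of \<open>u\<close>.\<close>
lemma frob_fix_subset_image_if_conditions:
  fixes a b :: 'a and q :: nat
  defines "\<delta> \<equiv> a ^ q\<^sup>2 * b + a * b ^ q\<^sup>2"
  assumes hq: "q = 2 ^ m" and "s = m" and "\<delta> \<noteq> 0"
    and eq\<^sub>1: "\<delta> ^ q * (a ^ q\<^sup>2 + a) + \<delta> * (b ^ q ^ 3 + b ^ q) = 0"
    and eq\<^sub>2: "\<delta> ^ q * (b ^ q\<^sup>2 + b) + \<delta> * (a ^ q ^ 3 + a ^ q) = 0"
  shows "frob_fix m \<subseteq> (\<lambda>y. a * y + b * y ^ 2 ^ s) ` frob_fix (2 * m)"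
proof
  define \<alpha> where "\<alpha> = (a ^ q\<^sup>2 + a) / \<delta>"
  define \<beta> where "\<beta> = (b ^ q\<^sup>2 + b) / \<delta>"
  have power_q: "(x + z) ^ q = x ^ q + z ^ q" for x z :: 'a
    using frob_add[of x z m] by (simp add: hq)
  have a: "a ^ q\<^sup>2 + a = \<delta> * \<alpha>" and b: "b ^ q\<^sup>2 + b = \<delta> * \<beta>"
    using \<open>\<delta> \<noteq> 0\<close> by (simp_all add: \<alpha>_def \<beta>_def)
  have "\<delta> ^ q * \<delta> * (\<alpha> + \<beta> ^ q) = 0"
    using eq\<^sub>1 unfolding power_exp_cube power_q[symmetric] a b
    by (simp add: algebra_simps power_mult_distrib)
  then have \<alpha>: "\<alpha> = \<beta> ^ q" using \<open>\<delta> \<noteq> 0\<close> eq_iff_add_eq_0 by simp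
  have "\<delta> ^ q * \<delta> * (\<beta> + \<alpha> ^ q) = 0"
    using eq\<^sub>2 unfolding power_exp_cube power_q[symmetric] a b
    by (simp add: algebra_simps power_mult_distrib)
  then have \<beta>: "\<beta> = \<alpha> ^ q" using \<open>\<delta> \<noteq> 0\<close> eq_iff_add_eq_0 by simp
  have "a * \<beta> + b * \<alpha> = (a * b ^ q\<^sup>2 + a ^ q\<^sup>2 * b + (a * b + a * b)) / \<delta>"
    by (simp add: \<alpha>_def \<beta>_def add_divide_distrib algebra_simps two_eq_0)
  then have one: "a * \<beta> + b * \<alpha> = 1"
    using \<open>\<delta> \<noteq> 0\<close> by (simp add: \<delta>_def add.commute)
  fix u :: 'a
  assume "u \<in> frob_fix m"
  then have u: "u ^ q = u" by (simp add: hq)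
  have "\<beta> ^ q\<^sup>2 = \<beta>" "u ^ q\<^sup>2 = u" by (simp_all only: power_exp_square u flip: \<alpha> \<beta>)
  then have "(u * \<beta>) ^ 2 ^ (2 * m) = u * \<beta>"
    by (simp add: hq power_mult_distrib power_mult[symmetric] mult.commute)
  moreover have "(u * \<beta>) ^ 2 ^ s = u * \<alpha>"
    using u \<alpha> \<open>s = m\<close> hq by (simp add: power_mult_distrib)
  then have "a * (u * \<beta>) + b * (u * \<beta>) ^ 2 ^ s = u * (a * \<beta> + b * \<alpha>)"
    by (simp add: algebra_simps)
  then have "a * (u * \<beta>) + b * (u * \<beta>) ^ 2 ^ s = u" by (simp add: one)
  ultimately show "u \<in> (\<lambda>y. a * y + b * y ^ 2 ^ s) ` frob_fix (2 * m)"
    by (metis (mono_tags, lifting) image_eqI mem_Collect_eq)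
qed

end

section \<open>The polynomial L on F_(q^2)\<close>

lemma sum_lessThan_mult_if_mod_eq:
  fixes f :: "nat \<Rightarrow> 'a::comm_monoid_add"
  assumes "k < M"
  shows "(\<Sum>i<h * M. if i mod M = k then f (i div M) else 0) = (\<Sum>j<h. f j)"
proof -
  have "(\<Sum>i<h * M. if i mod M = k then f (i div M) else 0)
      = (\<Sum>j<h. \<Sum>i\<in>{j * M..<j * M + M}. if i mod M = k then f (i div M) else 0)"
    by (rule sum.nat_group[symmetric])
  also have "\<dots> = (\<Sum>j<h. f j)"
  proof (rule sum.cong[OF refl])
    fix j
    have "{j * M..<j * M + M} = (\<lambda>r. j * M + r) ` {..<M}"
      by (simp add: image_add_atLeastLessThan lessThan_atLeast0 add.commute)
    then have "(\<Sum>i\<in>{j * M..<j * M + M}. if i mod M = k then f (i div M) else 0)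
        = (\<Sum>r<M. if r = k then f j else 0)"
      by (simp add: sum.reindex inj_on_def)
    also have "\<dots> = f j" using assms by simp
    finally show "(\<Sum>i\<in>{j * M..<j * M + M}. if i mod M = k then f (i div M) else 0) = f j" .
  qed
  finally show ?thesis .
qed

lemma lin2_poly_coeffL_on_frob_fix:
  fixes c d :: "nat \<Rightarrow> 'a::field"
  assumes "k < l" "l < 2 * m" "even n" and v: "v \<in> frob_fix (2 * m)"
  shows "lin2_poly (m * n) (coeffL m k l c d) v
    = q2_linear q n c 1 * v ^ 2 ^ k + q2_linear q n d 1 * v ^ 2 ^ l"
proof -
  have mn: "m * n = n div 2 * (2 * m)" using assms(3) by auto
  have "v ^ 2 ^ i = v ^ 2 ^ (i mod (2 * m))" for i by (rule frob_fix_power2_mod[OF v])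
  then have "lin2_poly (m * n) (coeffL m k l c d) v
      = (\<Sum>i<m * n. if i mod (2 * m) = k then c (i div (2 * m)) * v ^ 2 ^ k else 0)
      + (\<Sum>i<m * n. if i mod (2 * m) = l then d (i div (2 * m)) * v ^ 2 ^ l else 0)"
    using assms(1) by (auto simp: lin2_poly_def coeffL_def distrib_right simp flip: sum.distrib
        intro!: sum.cong)
  also have "\<dots> = (\<Sum>j<n div 2. c j * v ^ 2 ^ k) + (\<Sum>j<n div 2. d j * v ^ 2 ^ l)"
    unfolding mn
    using sum_lessThan_mult_if_mod_eq[where M = "2 * m" and k = k and f = "\<lambda>j. c j * v ^ 2 ^ k"]
      sum_lessThan_mult_if_mod_eq[where M = "2 * m" and k = l and f = "\<lambda>j. d j * v ^ 2 ^ l"]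
      assms(1,2) by simp
  finally show ?thesis by (simp add: q2_linear_def sum_distrib_right)
qed

lemma frob_fix_image_power2:
  assumes "k \<le> g"
  shows "(\<lambda>v. v ^ 2 ^ k) ` frob_fix g = (frob_fix g :: 'a::monoid_mult set)"
proof (intro equalityI subsetI)
  fix y :: 'a assume "y \<in> (\<lambda>v. v ^ 2 ^ k) ` frob_fix g"
  then obtain v where "v \<in> frob_fix g" "y = v ^ 2 ^ k" by (rule imageE)
  then show "y \<in> frob_fix g" using frob_fix_power[of v g "2 ^ k"] by (simp only:)
next
  fix y :: 'a assume y: "y \<in> frob_fix g"
  then have "y ^ 2 ^ (g - k) \<in> frob_fix g" by (rule frob_fix_power)
  moreover have "y = (y ^ 2 ^ (g - k)) ^ 2 ^ k"
    using y assms by (simp flip: power2_add_exp)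
  ultimately show "y \<in> (\<lambda>v. v ^ 2 ^ k) ` frob_fix g" by (rule rev_image_eqI)
qed

lemma image_lin2_poly_coeffL:
  fixes c d :: "nat \<Rightarrow> 'a::field"
  assumes "k < l" "l < 2 * m" "even n"
  shows "lin2_poly (m * n) (coeffL m k l c d) ` frob_fix (2 * m)
    = (\<lambda>y. q2_linear q n c 1 * y + q2_linear q n d 1 * y ^ 2 ^ (l - k)) ` frob_fix (2 * m)"
proof -
  let ?F = "\<lambda>y. q2_linear q n c 1 * y + q2_linear q n d 1 * y ^ 2 ^ (l - k)"
  have "lin2_poly (m * n) (coeffL m k l c d) v = ?F (v ^ 2 ^ k)" if "v \<in> frob_fix (2 * m)" for v
    using lin2_poly_coeffL_on_frob_fix[OF assms that] assms(1)
    by (simp flip: power2_add_exp)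
  then have "lin2_poly (m * n) (coeffL m k l c d) ` frob_fix (2 * m)
      = (\<lambda>v. ?F (v ^ 2 ^ k)) ` frob_fix (2 * m)"
    by (intro image_cong) simp_all
  also have "\<dots> = ?F ` ((\<lambda>v. v ^ 2 ^ k) ` frob_fix (2 * m))"
    by (simp only: image_image)
  also have "(\<lambda>v. v ^ 2 ^ k) ` frob_fix (2 * m) = (frob_fix (2 * m) :: 'a set)"
    using assms by (intro frob_fix_image_power2) simp
  finally show ?thesis .
qed

context binary_field
begin

lemma frob_fix_subset_image_iff_inside:
  fixes a b :: 'a and s :: nat
  assumes "m > 0" "2 * m * r = N" "s \<le> N" and hq: "q = 2 ^ m"
    and "a \<in> frob_fix (2 * m)" "b \<in> frob_fix (2 * m)"
  defines "e \<equiv> gcd s (2 * m)"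
  shows "frob_fix m \<subseteq> (\<lambda>y. a * y + b * y ^ 2 ^ s) ` frob_fix (2 * m)
    \<longleftrightarrow> a ^ ((q\<^sup>2 - 1) div (2 ^ e - 1)) \<noteq> b ^ ((q\<^sup>2 - 1) div (2 ^ e - 1))
      \<or> (e dvd m \<and> a \<noteq> 0 \<and> b \<noteq> 0
         \<and> a ^ ((2 ^ s * (q - 1)) div (2 ^ e - 1)) = b ^ ((q - 1) div (2 ^ e - 1)))"
proof -
  have "2 * m dvd N" using assms(2) by (auto intro: dvdI)
  show ?thesis
    unfolding frob_fix_subset_image_iff_kernel[OF assms(1-3,5,6)] e_def
    by (rule solutions_in_frob_fix_half_iff) fact+
qed

lemma frob_fix_subset_image_iff_outside:
  fixes a b :: 'a
  assumes "m > 0" "m dvd N" and hq: "q = 2 ^ m" and "0 < s" "s < 2 * m"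
    and outside: "\<not> (a ^ q\<^sup>2 = a \<and> b ^ q\<^sup>2 = b)"
  defines "\<delta> \<equiv> a ^ q\<^sup>2 * b + a * b ^ q\<^sup>2"
  shows "frob_fix m \<subseteq> (\<lambda>y. a * y + b * y ^ 2 ^ s) ` frob_fix (2 * m)
    \<longleftrightarrow> s = m \<and> a ^ q\<^sup>2 \<noteq> a \<and> \<delta> \<noteq> 0
      \<and> \<delta> ^ q * (a ^ q\<^sup>2 + a) + \<delta> * (b ^ q ^ 3 + b ^ q) = 0
      \<and> \<delta> ^ q * (b ^ q\<^sup>2 + b) + \<delta> * (a ^ q ^ 3 + a ^ q) = 0"
  unfolding \<delta>_def
  using conditions_if_frob_fix_subset_image[OF assms(1-6)]
    frob_fix_subset_image_if_conditions[OF hq, of s a b]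
  by blast

lemma trace_q2_adjoint_kernel_subset_iff:
  fixes c d :: "nat \<Rightarrow> 'a"
  assumes "m > 0" "q = 2 ^ m" "even n" "m * n = N" "k < l" "l < 2 * m"
  shows "{x. trace_q2 q n (adjoint2 (m * n) (coeffL m k l c d) x) = 0} \<subseteq> {x. trace_q q n x = 0}
    \<longleftrightarrow> frob_fix m
      \<subseteq> (\<lambda>y. q2_linear q n c 1 * y + q2_linear q n d 1 * y ^ 2 ^ (l - k)) ` frob_fix (2 * m)"
proof -
  have "2 * m * (n div 2) = N" using assms(3,4) by auto
  have "{x. trace_q2 q n (adjoint2 (m * n) (coeffL m k l c d) x) = 0} \<subseteq> {x. trace_q q n x = 0}
      \<longleftrightarrow> frob_fix m \<subseteq> lin2_poly (m * n) (coeffL m k l c d) ` frob_fix (2 * m)"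
    unfolding trace_q_eq_rel_trace[OF assms(2)] trace_q2_eq_rel_trace[OF assms(2)]
    by (rule kernel_subset_iff_image_superset[OF _ trace_lin2_poly_adjoint])
      (use assms \<open>2 * m * (n div 2) = N\<close> in
        \<open>auto simp: lin2_poly_def frob_add distrib_left sum.distrib\<close>)
  then show ?thesis by (simp only: image_lin2_poly_coeffL[OF assms(5,6,3), where q = q])
qed

end

theorem mainTheorem11:
  fixes m n k l q :: nat
    and c d :: "nat \<Rightarrow> 'a::{field,finite}"
  assumes hm: "m \<ge> 1"
    and hq: "q = 2 ^ m"
    and hn: "even n"
    and hcard: "card (UNIV :: 'a set) = q ^ n"
    and hkl: "k < l" "l < 2 * m"
  defines "Lk \<equiv> q2_linear q n c"
    and "Ll \<equiv> q2_linear q n d"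
  defines "e \<equiv> gcd (l - k) (2 * m)"
    and "a \<equiv> Lk 1"
    and "b \<equiv> Ll 1"
  defines "\<delta> \<equiv> a ^ (q^2) * b + a * b ^ (q^2)"
  shows "{x. trace_q2 q n (adjoint2 (m * n) (coeffL m k l c d) x) = 0} \<subseteq> {x. trace_q q n x = 0}
    \<longleftrightarrow>
      (l - k = m \<and> a ^ (q^2) \<noteq> a \<and> \<delta> \<noteq> 0 \<and>
        \<delta> ^ q * (a ^ (q^2) + a) + \<delta> * (b ^ (q^3) + b ^ q) = 0 \<and>
        \<delta> ^ q * (b ^ (q^2) + b) + \<delta> * (a ^ (q^3) + a ^ q) = 0)
    \<or> (a ^ (q^2) = a \<and> b ^ (q^2) = b \<and>
        a ^ ((q^2 - 1) div (2^e - 1)) \<noteq> b ^ ((q^2 - 1) div (2^e - 1)))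
    \<or> (e dvd m \<and> a \<noteq> 0 \<and> b \<noteq> 0 \<and> a ^ (q^2) = a \<and> b ^ (q^2) = b \<and>
        a ^ ((2^(l-k) * (q - 1)) div (2^e - 1)) = b ^ ((q - 1) div (2^e - 1)))"
proof -
  interpret binary_field "m * n" "TYPE('a)"
    by unfold_locales (simp add: hcard hq power_mult)
  have "m > 0" "m dvd m * n" "2 * m * (n div 2) = m * n" using hm hn by auto
  have "n \<ge> 2" using hn N_pos by (auto elim!: evenE)
  then have "l - k \<le> m * n" using hkl by (simp add: order.trans[of _ "2 * m"])
  have "0 < l - k" "l - k < 2 * m" using hkl by auto
  note reduction = trace_q2_adjoint_kernel_subset_iff[OF \<open>m > 0\<close> hq hn refl hkl, of c d,
      folded Lk_def Ll_def a_def b_def]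
  show ?thesis
  proof (cases "a ^ q\<^sup>2 = a \<and> b ^ q\<^sup>2 = b")
    case True
    moreover have "q\<^sup>2 = 2 ^ (2 * m)" by (simp add: hq power_mult[symmetric] mult.commute)
    ultimately have "a \<in> frob_fix (2 * m)" "b \<in> frob_fix (2 * m)" by simp_all
    with True show ?thesis
      unfolding reduction e_def frob_fix_subset_image_iff_inside[OF \<open>m > 0\<close>
          \<open>2 * m * (n div 2) = m * n\<close> \<open>l - k \<le> m * n\<close> hq \<open>a \<in> _\<close> \<open>b \<in> _\<close>]
      by blast
  next
    case False
    then show ?thesis
      unfolding reduction \<delta>_def
        frob_fix_subset_image_iff_outside[OF \<open>m > 0\<close> \<open>m dvd m * n\<close> hq \<open>0 < l - k\<close>
          \<open>l - k < 2 * m\<close> False]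
      by blast
  qed
qed

end
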